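(* Let $(\mathcal{Y},\mathbf{h})$ be an Ingletonian polymatroid and let $0\le \epsilon\le \mathbf{h}(\mathcal{Y})$. Define $\mathbf{g}:2^{\mathcal{Y}}\to\mathbb{R}$ by $\mathbf{g}(\mathcal{A})=\min\big(\mathbf{h}(\mathcal{A}),\ \mathbf{h}(\mathcal{Y})-\epsilon\big)$ for all $\mathcal{A}\subseteq\mathcal{Y}$. Then $(\mathcal{Y},\mathbf{g})$ is also an Ingletonian polymatroid.
   Context: A polymatroid $(\mathcal{X},\mathbf{h})$ consists of a finite ground set $\mathcal{X}$ and a function $\mathbf{h}:2^{\mathcal{X}}\to\mathbb{R}_{\ge 0}$ with $\mathbf{h}(\emptyset)=0$, $\mathbf{h}(\mathcal{A})\le\mathbf{h}(\mathcal{B})$ whenever $\mathcal{A}\subseteq\mathcal{B}$, and $\mathbf{h}(\mathcal{A}\cup\mathcal{B})+\mathbf{h}(\mathcal{A}\cap\mathcal{B})\le\mathbf{h}(\mathcal{A})+\mathbf{h}(\mathcal{B})$ for all $\mathcal{A},\mathcal{B}\subseteq\mathcal{X}$. Writing concatenation for union, define for subsets $\mathcal{A}_1,\dots,\mathcal{A}_4\subseteq\mathcal{X}$ $J_{\mathbf{h}}(\mathcal{A}_1,\mathcal{A}_2,\mathcal{A}_3,\mathcal{A}_4)=\mathbf{h}(\mathcal{A}_1\mathcal{A}_2)+\mathbf{h}(\mathcal{A}_1\mathcal{A}_3)+\mathbf{h}(\mathcal{A}_1\mathcal{A}_4)+\mathbf{h}(\mathcal{A}_2\mathcal{A}_3)+\mathbf{h}(\mathcal{A}_2\mathcal{A}_4)-\mathbf{h}(\mathcal{A}_1)-\mathbf{h}(\mathcal{A}_2)-\mathbf{h}(\mathcal{A}_3\mathcal{A}_4)-\mathbf{h}(\mathcal{A}_1\mathcal{A}_2\mathcal{A}_3)-\mathbf{h}(\mathcal{A}_1\mathcal{A}_2\mathcal{A}_4)$.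 A polymatroid is Ingletonian if $J_{\mathbf{h}}(\mathcal{A}_1,\mathcal{A}_2,\mathcal{A}_3,\mathcal{A}_4)\ge 0$ for all subsets $\mathcal{A}_1,\dots,\mathcal{A}_4\subseteq\mathcal{X}$. *)

theory Defs
  imports Complex_Main
begin

definition polymatroid :: "'a set \<Rightarrow> ('a set \<Rightarrow> real) \<Rightarrow> bool" where
  "polymatroid Y h \<longleftrightarrow> finite Y \<and>
     (\<forall>A. A \<subseteq> Y \<longrightarrow> h A \<ge> 0) \<and>
     h {} = 0 \<and>
     (\<forall>A B. A \<subseteq> B \<and> B \<subseteq> Y \<longrightarrow> h A \<le> h B) \<and>
     (\<forall>A B. A \<subseteq> Y \<and> B \<subseteq> Y \<longrightarrow> h (A \<union> B) + h (A \<inter> B) \<le> h A + h B)"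

definition ingleton_J :: "('a set \<Rightarrow> real) \<Rightarrow> 'a set \<Rightarrow> 'a set \<Rightarrow> 'a set \<Rightarrow> 'a set \<Rightarrow> real" where
  "ingleton_J h A1 A2 A3 A4 =
     h (A1 \<union> A2) + h (A1 \<union> A3) + h (A1 \<union> A4) + h (A2 \<union> A3) + h (A2 \<union> A4)
     - h A1 - h A2 - h (A3 \<union> A4) - h (A1 \<union> A2 \<union> A3) - h (A1 \<union> A2 \<union> A4)"

definition ingletonian :: "'a set \<Rightarrow> ('a set \<Rightarrow> real) \<Rightarrow> bool" where
  "ingletonian Y h \<longleftrightarrow> polymatroid Y h \<and>
     (\<forall>A1 A2 A3 A4. A1 \<subseteq> Y \<and> A2 \<subseteq> Y \<and> A3 \<subseteq> Y \<and> A4 \<subseteq> Y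
        \<longrightarrow> ingleton_J h A1 A2 A3 A4 \<ge> 0)"

end

theory Submission
  imports Defs
begin

text \<open>Truncation \<open>g = min h c\<close> (with \<open>c = h Y - \<epsilon> \<ge> 0\<close>) clearly keeps the polymatroid axioms.
  Write \<open>g(13)\<close> for \<open>g (A1 \<union> A3)\<close> etc.  Submodularity alone gives two lower bounds on the
  Ingleton expression: \<open>J g \<ge> g(1234) + g(12) - g(123) - g(124)\<close>, which is \<open>0\<close> when \<open>c \<le> h(12)\<close>,
  and \<open>J g \<ge> g(13) + g(23) - g(123) - g(34)\<close>, which is \<open>c - g(34) \<ge> 0\<close> when \<open>c \<le> h(13), h(23)\<close>
  (symmetrically for 4 instead of 3).  Otherwise nothing below \<open>A1 \<union> A2\<close> is cut, and in each
  of the pairs \<open>h(13), h(23)\<close> and \<open>h(14), h(24)\<close> at most one value exceeds \<open>c\<close>; then truncation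
  can only increase \<open>J\<close>, so \<open>J g \<ge> J h \<ge> 0\<close>.\<close>

lemma polymatroid_nonneg: "polymatroid Y h \<Longrightarrow> A \<subseteq> Y \<Longrightarrow> 0 \<le> h A"
  unfolding polymatroid_def by blast

lemma polymatroid_mono: "polymatroid Y h \<Longrightarrow> A \<subseteq> B \<Longrightarrow> B \<subseteq> Y \<Longrightarrow> h A \<le> h B"
  unfolding polymatroid_def by blast

lemma polymatroid_submodular:
  "polymatroid Y h \<Longrightarrow> A \<subseteq> Y \<Longrightarrow> B \<subseteq> Y \<Longrightarrow> h (A \<union> B) + h (A \<inter> B) \<le> h A + h B"
  unfolding polymatroid_def by blast

lemma polymatroid_submodular_le:
  assumes "polymatroid Y h" "A \<subseteq> Y" "B \<subseteq> Y" "C \<subseteq> A \<inter> B"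
  shows "h (A \<union> B) + h C \<le> h A + h B"
  using polymatroid_submodular[OF assms(1-3)] polymatroid_mono[OF assms(1,4)] assms(2)
  by fastforce

lemma polymatroid_truncation:
  assumes h: "polymatroid Y h" and "0 \<le> c"
  shows "polymatroid Y (\<lambda>A. min (h A) c)"
  unfolding polymatroid_def
proof (intro conjI allI impI)
  show "finite Y" "min (h {}) c = 0"
    using h \<open>0 \<le> c\<close> unfolding polymatroid_def by auto
  show "0 \<le> min (h A) c" if "A \<subseteq> Y" for A
    using polymatroid_nonneg[OF h that] \<open>0 \<le> c\<close> by simp
  show "min (h A) c \<le> min (h B) c" if "A \<subseteq> B \<and> B \<subseteq> Y" for A B
    using polymatroid_mono[OF h] that by (simp add: min.coboundedI1)
next
  fix A B assume "A \<subseteq> Y \<and> B \<subseteq> Y"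
  then have "h (A \<union> B) + h (A \<inter> B) \<le> h A + h B"
    and "h A \<le> h (A \<union> B)" "h B \<le> h (A \<union> B)" "h (A \<inter> B) \<le> h A" "h (A \<inter> B) \<le> h B"
    using polymatroid_submodular[OF h] polymatroid_mono[OF h] by auto
  then show "min (h (A \<union> B)) c + min (h (A \<inter> B)) c \<le> min (h A) c + min (h B) c"
    by linarith
qed

lemma ingleton_J_swap34: "ingleton_J g A1 A2 A4 A3 = ingleton_J g A1 A2 A3 A4"
  unfolding ingleton_J_def by (simp add: Un_ac)

lemma ingleton_J_lower_bound_top:
  assumes g: "polymatroid Y g" and "A1 \<subseteq> Y" "A2 \<subseteq> Y" "A3 \<subseteq> Y" "A4 \<subseteq> Y"
  shows "g (A1 \<union> A2 \<union> A3 \<union> A4) + g (A1 \<union> A2)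
    \<le> ingleton_J g A1 A2 A3 A4 + g (A1 \<union> A2 \<union> A3) + g (A1 \<union> A2 \<union> A4)"
proof -
  have "g (A1 \<union> A3 \<union> A4) + g A1 \<le> g (A1 \<union> A3) + g (A1 \<union> A4)"
    using polymatroid_submodular_le[OF g, of "A1 \<union> A3" "A1 \<union> A4" A1] assms
    by (simp add: Un_ac)
  moreover have "g (A2 \<union> A3 \<union> A4) + g A2 \<le> g (A2 \<union> A3) + g (A2 \<union> A4)"
    using polymatroid_submodular_le[OF g, of "A2 \<union> A3" "A2 \<union> A4" A2] assms
    by (simp add: Un_ac)
  moreover have "g (A1 \<union> A2 \<union> A3 \<union> A4) + g (A3 \<union> A4)
      \<le> g (A1 \<union> A3 \<union> A4) + g (A2 \<union> A3 \<union> A4)"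
    using polymatroid_submodular_le[OF g, of "A1 \<union> A3 \<union> A4" "A2 \<union> A3 \<union> A4" "A3 \<union> A4"]
      assms
    by (simp add: Un_ac)
  ultimately show ?thesis
    unfolding ingleton_J_def by linarith
qed

lemma ingleton_J_lower_bound_cond:
  assumes g: "polymatroid Y g" and "A1 \<subseteq> Y" "A2 \<subseteq> Y" "A3 \<subseteq> Y" "A4 \<subseteq> Y"
  shows "g (A1 \<union> A3) + g (A2 \<union> A3)
    \<le> ingleton_J g A1 A2 A3 A4 + g (A1 \<union> A2 \<union> A3) + g (A3 \<union> A4)"
proof -
  have "g (A1 \<union> A2 \<union> A4) + g A1 \<le> g (A1 \<union> A2) + g (A1 \<union> A4)"
    using polymatroid_submodular_le[OF g, of "A1 \<union> A2" "A1 \<union> A4" A1] assms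
    by (simp add: Un_ac)
  moreover have "g A2 \<le> g (A2 \<union> A4)"
    using polymatroid_mono[OF g] assms by simp
  ultimately show ?thesis
    unfolding ingleton_J_def by linarith
qed

lemma min_sum_diff_ge:
  fixes a b u c :: real
  assumes "a \<le> u" "b \<le> u" "a \<le> c \<or> b \<le> c"
  shows "a + b - u \<le> min a c + min b c - min u c"
  using assms by linarith

context
  fixes Y :: "'a set" and h :: "'a set \<Rightarrow> real" and c :: real
    and A1 A2 A3 A4 :: "'a set"
  assumes h: "polymatroid Y h"
    and subsets: "A1 \<subseteq> Y" "A2 \<subseteq> Y" "A3 \<subseteq> Y" "A4 \<subseteq> Y"
begin

private lemma h_mono: "A \<subseteq> B \<Longrightarrow> B \<subseteq> Y \<Longrightarrow> h A \<le> h B"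
  using polymatroid_mono[OF h] .

lemma ingleton_J_truncation_nonneg_top_cut:
  assumes "0 \<le> c" "c \<le> h (A1 \<union> A2)"
  shows "0 \<le> ingleton_J (\<lambda>A. min (h A) c) A1 A2 A3 A4"
proof -
  have "h (A1 \<union> A2) \<le> h (A1 \<union> A2 \<union> A3)" "h (A1 \<union> A2) \<le> h (A1 \<union> A2 \<union> A4)"
    and "h (A1 \<union> A2) \<le> h (A1 \<union> A2 \<union> A3 \<union> A4)"
    using subsets by (auto intro!: h_mono)
  then have "min (h (A1 \<union> A2)) c = c" "min (h (A1 \<union> A2 \<union> A3)) c = c"
    and "min (h (A1 \<union> A2 \<union> A4)) c = c" "min (h (A1 \<union> A2 \<union> A3 \<union> A4)) c = c"
    using assms(2-) by (simp_all add: min.absorb2)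
  then show ?thesis
    using ingleton_J_lower_bound_top[OF polymatroid_truncation[OF h \<open>0 \<le> c\<close>] subsets]
    by simp
qed

lemma ingleton_J_truncation_nonneg_cond_cut:
  assumes "0 \<le> c" "c \<le> h (A1 \<union> A3)" "c \<le> h (A2 \<union> A3)"
  shows "0 \<le> ingleton_J (\<lambda>A. min (h A) c) A1 A2 A3 A4"
proof -
  have "h (A1 \<union> A3) \<le> h (A1 \<union> A2 \<union> A3)"
    using subsets by (auto intro!: h_mono)
  then have "min (h (A1 \<union> A3)) c = c" "min (h (A2 \<union> A3)) c = c"
    and "min (h (A1 \<union> A2 \<union> A3)) c = c"
    using assms(2-) by (simp_all add: min.absorb2)
  moreover have "min (h (A3 \<union> A4)) c \<le> c"
    by (rule min.cobounded2)
  ultimately show ?thesis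
    using ingleton_J_lower_bound_cond[OF polymatroid_truncation[OF h \<open>0 \<le> c\<close>] subsets]
    by simp
qed

lemma ingleton_J_truncation_ge:
  assumes "h (A1 \<union> A2) \<le> c"
    and "h (A1 \<union> A3) \<le> c \<or> h (A2 \<union> A3) \<le> c"
    and "h (A1 \<union> A4) \<le> c \<or> h (A2 \<union> A4) \<le> c"
  shows "ingleton_J h A1 A2 A3 A4 \<le> ingleton_J (\<lambda>A. min (h A) c) A1 A2 A3 A4"
proof -
  have "h A1 \<le> c" "h A2 \<le> c"
    using assms(1) h_mono[of A1 "A1 \<union> A2"] h_mono[of A2 "A1 \<union> A2"] subsets by auto
  then have "min (h A1) c = h A1" "min (h A2) c = h A2"
    and "min (h (A1 \<union> A2)) c = h (A1 \<union> A2)"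
    using assms(1) by simp_all
  moreover have "h (A1 \<union> A3) + h (A2 \<union> A3) - h (A1 \<union> A2 \<union> A3)
      \<le> min (h (A1 \<union> A3)) c + min (h (A2 \<union> A3)) c - min (h (A1 \<union> A2 \<union> A3)) c"
    by (rule min_sum_diff_ge[OF h_mono h_mono assms(2)]) (use subsets in auto)
  moreover have "h (A1 \<union> A4) + h (A2 \<union> A4) - h (A1 \<union> A2 \<union> A4)
      \<le> min (h (A1 \<union> A4)) c + min (h (A2 \<union> A4)) c - min (h (A1 \<union> A2 \<union> A4)) c"
    by (rule min_sum_diff_ge[OF h_mono h_mono assms(3)]) (use subsets in auto)
  moreover have "min (h (A3 \<union> A4)) c \<le> h (A3 \<union> A4)"
    by (rule min.cobounded1)
  ultimately show ?thesis
    unfolding ingleton_J_def by linarith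
qed

end

lemma ingleton_J_truncation_nonneg:
  assumes h: "polymatroid Y h" and "0 \<le> c"
    and subsets: "A1 \<subseteq> Y" "A2 \<subseteq> Y" "A3 \<subseteq> Y" "A4 \<subseteq> Y"
    and J: "0 \<le> ingleton_J h A1 A2 A3 A4"
  shows "0 \<le> ingleton_J (\<lambda>A. min (h A) c) A1 A2 A3 A4"
proof (cases "c \<le> h (A1 \<union> A2)")
  case True
  then show ?thesis
    by (rule ingleton_J_truncation_nonneg_top_cut[OF h subsets \<open>0 \<le> c\<close>])
next
  case False
  consider "c \<le> h (A1 \<union> A3)" "c \<le> h (A2 \<union> A3)"
    | "c \<le> h (A1 \<union> A4)" "c \<le> h (A2 \<union> A4)"
    | "h (A1 \<union> A3) \<le> c \<or> h (A2 \<union> A3) \<le> c" "h (A1 \<union> A4) \<le> c \<or> h (A2 \<union> A4) \<le> c"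
    by linarith
  then show ?thesis
  proof cases
    case 1
    then show ?thesis
      by (rule ingleton_J_truncation_nonneg_cond_cut[OF h subsets \<open>0 \<le> c\<close>])
  next
    case 2
    then have "0 \<le> ingleton_J (\<lambda>A. min (h A) c) A1 A2 A4 A3"
      by (rule ingleton_J_truncation_nonneg_cond_cut[OF h subsets(1,2,4,3) \<open>0 \<le> c\<close>])
    then show ?thesis
      by (simp only: ingleton_J_swap34)
  next
    case 3
    with False have "ingleton_J h A1 A2 A3 A4 \<le> ingleton_J (\<lambda>A. min (h A) c) A1 A2 A3 A4"
      by (intro ingleton_J_truncation_ge[OF h subsets]) simp_all
    with J show ?thesis
      by linarith
  qed
qed

theorem theorem1:
  fixes Y :: "'a set" and h :: "'a set \<Rightarrow> real" and \<epsilon> :: real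
  assumes "ingletonian Y h"
    and "0 \<le> \<epsilon>" and "\<epsilon> \<le> h Y"
  shows "ingletonian Y (\<lambda>A. min (h A) (h Y - \<epsilon>))"
proof -
  have h: "polymatroid Y h"
    and J: "\<And>A1 A2 A3 A4. A1 \<subseteq> Y \<Longrightarrow> A2 \<subseteq> Y \<Longrightarrow> A3 \<subseteq> Y \<Longrightarrow> A4 \<subseteq> Y
              \<Longrightarrow> 0 \<le> ingleton_J h A1 A2 A3 A4"
    using assms(1) unfolding ingletonian_def by blast+
  have c: "0 \<le> h Y - \<epsilon>"
    using assms(3) by simp
  show ?thesis
    unfolding ingletonian_def
    using polymatroid_truncation[OF h c] ingleton_J_truncation_nonneg[OF h c _ _ _ _ J]
    by blast
qed

end
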